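(* An infinite $\frac{7}{3}$-power-free binary word is a fixed point of a non-identity morphism $h:\{0,1\}^*\to\{0,1\}^*$ if and only if it is equal to the Thue–Morse word $\mu^\omega(0)$ or its complement $\mu^\omega(1)$.
   Context: $\mu$ is the Thue–Morse morphism, $\mu(0)=01$, $\mu(1)=10$, and $\mu^\omega(a)$ is the infinite word $\lim_{n\to\infty}\mu^n(a)$ for $a\in\{0,1\}$. The identity morphism maps $0\mapsto 0$, $1\mapsto 1$. An infinite word $\mathbf{w}$ is a fixed point of $h$ if $h(\mathbf{w})=\mathbf{w}$ (with $h$ applied letterwise). For a rational $\alpha\ge 1$, an $\alpha$-power is a word of the form $x^nx'$ with $x$ a nonempty word, $x'$ a prefix of $x$, $n$ a nonnegative integer and $n+|x'|/|x|=\alpha$. A word is $\alpha$-power-free if none of its finite subwords is a $\beta$-power for any rational $\beta\geq\alpha$. *)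

theory Defs
  imports Complex_Main "HOL-Library.Sublist"
begin

(* Binary alphabet {0,1} encoded as bool: 0 = False, 1 = True.
   Finite words: bool list.  Infinite words: nat => bool. *)

type_synonym morphism = "bool \<Rightarrow> bool list"

definition morph_apply :: "morphism \<Rightarrow> bool list \<Rightarrow> bool list" where
  "morph_apply h u = concat (map h u)"

definition id_morph :: morphism where
  "id_morph = (\<lambda>a. [a])"

definition mu :: morphism where
  "mu a = [a, \<not> a]"

(* mu^omega(a): the limit of mu^n(a); mu^(Suc i)(a) has length 2^(i+1) > i,
   and each mu^n(a) is a prefix of mu^(n+1)(a), so position i is read off there. *)
definition thue_morse :: "bool \<Rightarrow> (nat \<Rightarrow> bool)" where
  "thue_morse a i = ((morph_apply mu ^^ Suc i) [a]) ! i"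

definition pref :: "(nat \<Rightarrow> bool) \<Rightarrow> nat \<Rightarrow> bool list" where
  "pref w n = map w [0..<n]"

(* h(w) = w for infinite w: the images of the prefixes of w are prefixes of w,
   and their lengths are unbounded (so h(w) is indeed infinite). *)
definition fixed_point :: "morphism \<Rightarrow> (nat \<Rightarrow> bool) \<Rightarrow> bool" where
  "fixed_point h w \<longleftrightarrow>
     (\<forall>n. prefix (morph_apply h (pref w n)) (pref w (length (morph_apply h (pref w n))))) \<and>
     (\<forall>N. \<exists>n. N \<le> length (morph_apply h (pref w n)))"

definition is_power :: "bool list \<Rightarrow> rat \<Rightarrow> bool" where
  "is_power u \<beta> \<longleftrightarrow> (\<exists>x x' n. x \<noteq> [] \<and> prefix x' x \<and>
      u = concat (replicate n x) @ x' \<and> of_nat n + of_nat (length x') / of_nat (length x) = \<beta>)"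

definition subword_of :: "bool list \<Rightarrow> (nat \<Rightarrow> bool) \<Rightarrow> bool" where
  "subword_of u w \<longleftrightarrow> (\<exists>i. u = map w [i..<i + length u])"

definition power_free :: "rat \<Rightarrow> (nat \<Rightarrow> bool) \<Rightarrow> bool" where
  "power_free \<alpha> w \<longleftrightarrow> (\<forall>u \<beta>. subword_of u w \<and> \<alpha> \<le> \<beta> \<longrightarrow> \<not> is_power u \<beta>)"

end

theory Submission
  imports Defs
begin

text \<open>
  Since \<open>w\<close> avoids \<open>aaa\<close>,
  \<open>ababa\<close> and factors of length 7 with period 3, consecutive squares \<open>aa\<close> are 2 or 4 positions
  apart, so all squares after position 0 start at positions of one parity. Power-freeness also
  rules out that \<open>h\<close> erases or fixes a letter, so some power \<open>g\<close> of \<open>h\<close> has images of length at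
  least 5. Each \<open>g(a)\<close> then contains a square at a fixed offset, hence the blocks \<open>g(a)\<close> in
  \<open>w = g(w)\<close> start at positions of one parity; as \<open>aa\<close> occurs in \<open>w\<close>, the images have even
  length, and \<open>w\<close> alternates on the pairs \<open>(2i+q, 2i+q+1)\<close>. For \<open>q = 1\<close> all images would end
  with the same letter, which is refuted by a descent on \<open>|g(0)| + |g(1)|\<close> (short images create
  a \<open>(2L+1)/L\<close>-power, long ones can be halved by the same parity argument). So \<open>w = \<mu>(y)\<close>,
  where \<open>y\<close> is again \<open>7/3\<close>-power-free and fixed by \<open>g' \<circ> \<mu>\<close>, with \<open>g'(a)\<close> the even-indexed
  letters of \<open>g(a)\<close>. Induction on positions then gives \<open>w = \<mu>\<^sup>\<omega>(w\<^sub>0)\<close>.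
\<close>

section \<open>Periodic factors and squares\<close>

definition has_period :: "(nat \<Rightarrow> bool) \<Rightarrow> nat \<Rightarrow> nat \<Rightarrow> nat \<Rightarrow> bool" where
  "has_period y i N p \<longleftrightarrow> (\<forall>t. t + p < N \<longrightarrow> y (i + t) = y (i + t + p))"

lemma has_period_iff: "has_period y i N p \<longleftrightarrow> (\<forall>t < N - p. y (i + t) = y (i + t + p))"
  unfolding has_period_def by (metis less_diff_conv)

lemma has_period_mod:
  assumes "has_period y i N p" "0 < p" "t < N"
  shows "y (i + t) = y (i + t mod p)"
  using assms(3)
proof (induction t rule: less_induct)
  case (less t)
  show ?case
  proof (cases "t < p")
    case False
    then have "y (i + (t - p)) = y (i + (t - p) mod p)"
      using less.IH[of "t - p"] less.prems assms(2) by simp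
    moreover have "y (i + (t - p)) = y (i + t)"
      using assms(1) False less.prems unfolding has_period_def
      by (metis add.assoc le_add_diff_inverse2 not_less)
    moreover have "(t - p) mod p = t mod p"
      using False by (simp add: le_mod_geq)
    ultimately show ?thesis by simp
  qed simp
qed

lemma nth_concat_replicate:
  "t < n * length x \<Longrightarrow> concat (replicate n x) ! t = x ! (t mod length x)"
proof (induction n arbitrary: t)
  case (Suc n)
  then show ?case
    by (cases "t < length x") (auto simp: nth_append le_mod_geq)
qed simp

lemma periodic_factor_power:
  assumes per: "has_period y i N p" and p: "0 < p"
  shows "map y [i..<i + N] = concat (replicate (N div p) (map y [i..<i + p])) @ map y [i..<i + N mod p]"
    (is "_ = concat (replicate ?n ?x) @ ?x'")
proof (rule nth_equalityI)
  have lengths: "length ?x = p" "length (concat (replicate ?n ?x)) = ?n * p"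
    by (simp_all add: length_concat sum_list_replicate)
  have N_split: "?n * p + N mod p = N"
    by simp
  show "length (map y [i..<i + N]) = length (concat (replicate ?n ?x) @ ?x')"
    using lengths N_split by simp
  fix t
  assume "t < length (map y [i..<i + N])"
  then have t: "t < N"
    by simp
  have "concat (replicate ?n ?x) ! t = y (i + t mod p)" if "t < ?n * p"
    using that nth_concat_replicate[of t ?n ?x] lengths p by simp
  moreover have "?x' ! (t - ?n * p) = y (i + t mod p)" if "\<not> t < ?n * p"
  proof -
    have "t - ?n * p < p"
      using that t N_split mod_less_divisor[OF p, of N] by linarith
    then have "t - ?n * p = t mod p"
      using that by (metis le_add_diff_inverse mod_less mod_mult_self3 not_less)
    moreover have "t mod p < N mod p"
      using calculation that t N_split by linarith
    ultimately show ?thesis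
      by simp
  qed
  ultimately show "map y [i..<i + N] ! t = (concat (replicate ?n ?x) @ ?x') ! t"
    using has_period_mod[OF per p t] t lengths by (simp add: nth_append)
qed

lemma periodic_factor_short:
  fixes \<alpha> :: rat
  assumes pf: "power_free \<alpha> y" and p: "0 < p" and per: "has_period y i N p"
  shows "of_nat N < \<alpha> * of_nat p"
proof (rule ccontr)
  assume long: "\<not> of_nat N < \<alpha> * of_nat p"
  define x where "x = map y [i..<i + p]"
  define x' where "x' = map y [i..<i + N mod p]"
  have "prefix x' x"
  proof -
    have "[i..<i + p] = [i..<i + N mod p] @ [i + N mod p..<i + p]"
      using upt_add_eq_append[of i "i + N mod p" "p - N mod p"] p by simp
    then show ?thesis
      unfolding x_def x'_def by (simp add: prefixI)
  qed
  moreover have "map y [i..<i + N] = concat (replicate (N div p) x) @ x'"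
    unfolding x_def x'_def by (rule periodic_factor_power[OF per p])
  moreover have "of_nat (N div p) + of_nat (length x') / of_nat (length x) = (of_nat N :: rat) / of_nat p"
    using p unfolding x_def x'_def
    by (simp add: field_simps flip: of_nat_mult of_nat_add)
  moreover have "\<alpha> \<le> of_nat N / of_nat p"
    using long p by (simp add: field_simps)
  moreover have "x \<noteq> []"
    using p unfolding x_def by simp
  ultimately have "is_power (map y [i..<i + N]) (of_nat N / of_nat p)"
    unfolding is_power_def by metis
  moreover have "subword_of (map y [i..<i + N]) y"
    unfolding subword_of_def by auto
  ultimately show False
    using pf \<open>\<alpha> \<le> of_nat N / of_nat p\<close> unfolding power_free_def by blast
qed

lemma periodic_factor_short_73:
  assumes "power_free (7/3) y" "0 < p" "has_period y i N p"
  shows "3 * N < 7 * p"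
proof -
  have "(of_nat N :: rat) < 7/3 * of_nat p"
    using periodic_factor_short[OF assms] .
  then have "(of_nat (3 * N) :: rat) < of_nat (7 * p)"
    by simp
  then show ?thesis
    by (simp only: of_nat_less_iff)
qed

lemma no_letter_cube:
  assumes "power_free (7/3) y"
  shows "\<not> (y j = y (j + 1) \<and> y (j + 1) = y (j + 2))"
proof
  assume "y j = y (j + 1) \<and> y (j + 1) = y (j + 2)"
  then have per: "has_period y j 3 1"
    unfolding has_period_iff by (simp add: numeral_eq_Suc All_less_Suc)
  show False
    using periodic_factor_short_73[OF assms _ per] by simp
qed

lemma no_period_2_factor_5:
  assumes "power_free (7/3) y"
  shows "\<not> (y j \<noteq> y (j + 1) \<and> y (j + 1) \<noteq> y (j + 2) \<and> y (j + 2) \<noteq> y (j + 3) \<and> y (j + 3) \<noteq> y (j + 4))"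
proof
  assume "y j \<noteq> y (j + 1) \<and> y (j + 1) \<noteq> y (j + 2) \<and> y (j + 2) \<noteq> y (j + 3) \<and> y (j + 3) \<noteq> y (j + 4)"
  then have per: "has_period y j 5 2"
    unfolding has_period_iff by (simp add: numeral_eq_Suc All_less_Suc)
  show False
    using periodic_factor_short_73[OF assms _ per] by simp
qed

lemma no_period_3_factor_7:
  assumes "power_free (7/3) y"
  shows "\<not> (y j = y (j + 3) \<and> y (j + 1) = y (j + 4) \<and> y (j + 2) = y (j + 5) \<and> y (j + 3) = y (j + 6))"
proof
  assume "y j = y (j + 3) \<and> y (j + 1) = y (j + 4) \<and> y (j + 2) = y (j + 5) \<and> y (j + 3) = y (j + 6)"
  then have per: "has_period y j 7 3"
    unfolding has_period_iff by (simp add: numeral_eq_Suc All_less_Suc)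
  show False
    using periodic_factor_short_73[OF assms _ per] by simp
qed

lemma letter_within_2:
  assumes "power_free (7/3) y"
  obtains d where "d \<le> 2" "y (k + d) = x" "\<And>j. j < d \<Longrightarrow> y (k + j) = (\<not> x)"
proof -
  have "\<not> (y k = (\<not> x) \<and> y (Suc k) = (\<not> x) \<and> y (Suc (Suc k)) = (\<not> x))"
    using no_letter_cube[OF assms, of k] by auto
  then consider "y k = x" | "y k = (\<not> x)" "y (Suc k) = x"
    | "y k = (\<not> x)" "y (Suc k) = (\<not> x)" "y (Suc (Suc k)) = x"
    by fastforce
  then show ?thesis
  proof cases
    case 1
    then show ?thesis
      using that[of 0] by simp
  next
    case 2
    then show ?thesis
      using that[of 1] by simp
  next
    case 3
    then have "y (k + j) = (\<not> x)" if "j < 2" for j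
      using that by (auto simp: less_Suc_eq numeral_2_eq_2)
    then show ?thesis
      using that[of 2] 3(3) by (simp add: numeral_2_eq_2)
  qed
qed

definition square_at :: "(nat \<Rightarrow> bool) \<Rightarrow> nat \<Rightarrow> bool" where
  "square_at y i \<longleftrightarrow> y i = y (Suc i)"

(* The forbidden factor of period 3 starts one letter before the square, hence \<open>1 \<le> i\<close>. *)
lemma next_square_at:
  assumes pf: "power_free (7/3) y" and "1 \<le> i" and "square_at y i"
  obtains d where "d = 2 \<or> d = 4" "square_at y (i + d)" "y (i + d) \<noteq> y i"
    "\<And>e. 0 < e \<Longrightarrow> e < d \<Longrightarrow> \<not> square_at y (i + e)"
proof -
  obtain j where i: "i = Suc j"
    using \<open>1 \<le> i\<close> by (metis Suc_le_D One_nat_def)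
  note forbidden = no_letter_cube[OF pf, of j] no_letter_cube[OF pf, of "j + 1"]
    no_letter_cube[OF pf, of "j + 4"] no_period_2_factor_5[OF pf, of "j + 2"]
    no_period_3_factor_7[OF pf, of j]
  have "\<not> square_at y (i + 1) \<and>
    (square_at y (i + 2) \<and> y (i + 2) \<noteq> y i \<or>
     \<not> square_at y (i + 2) \<and> \<not> square_at y (i + 3) \<and> square_at y (i + 4) \<and> y (i + 4) \<noteq> y i)"
    using forbidden \<open>square_at y i\<close> unfolding square_at_def i by (simp add: eval_nat_numeral) argo
  moreover have "e = 1" if "0 < e" "e < 2" for e :: nat
    using that by simp
  moreover have "e = 1 \<or> e = 2 \<or> e = 3" if "0 < e" "e < 4" for e :: nat
    using that by auto
  ultimately show ?thesis
    using that[of 2] that[of 4] by blast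
qed

lemma square_at_same_parity:
  assumes pf: "power_free (7/3) y" and "1 \<le> i" "1 \<le> j" "square_at y i" "square_at y j"
  shows "even i = even j"
proof -
  have even_gap: "even m" if "1 \<le> i" "square_at y i" "square_at y (i + m)" for i m
    using that
  proof (induction m arbitrary: i rule: less_induct)
    case (less m)
    obtain d where d: "d = 2 \<or> d = 4" "square_at y (i + d)"
      and gap: "\<And>e. 0 < e \<Longrightarrow> e < d \<Longrightarrow> \<not> square_at y (i + e)"
      using next_square_at[OF pf less.prems(1,2)] by blast
    show ?case
    proof (cases "m = 0")
      case False
      then have "d \<le> m"
        using gap[of m] less.prems(3) by (cases "m < d") auto
      moreover have "m - d < m"
        using d False by auto
      moreover have "square_at y (i + d + (m - d))"
        using \<open>d \<le> m\<close> less.prems(3) by simp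
      ultimately have "even (m - d)"
        using less.IH[of "m - d" "i + d"] d(2) less.prems(1) by simp
      then show ?thesis
        using d \<open>d \<le> m\<close> by auto
    qed simp
  qed
  show ?thesis
  proof (cases "i \<le> j")
    case True
    then obtain m where "j = i + m"
      using le_Suc_ex by blast
    then show ?thesis
      using even_gap[of i m] assms by auto
  next
    case False
    then obtain m where "i = j + m"
      using le_Suc_ex[of j i] by auto
    then show ?thesis
      using even_gap[of j m] assms by auto
  qed
qed

lemma square_at_within_4:
  assumes "power_free (7/3) y"
  shows "\<exists>r<4. square_at y (i + r)"
proof -
  have "\<not> (\<forall>r<4. \<not> square_at y (i + r))"
    using no_period_2_factor_5[OF assms, of i]
    unfolding square_at_def by (simp add: numeral_eq_Suc All_less_Suc) blast
  then show ?thesis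
    by blast
qed

lemma exists_square_at:
  assumes "power_free (7/3) y"
  obtains i where "1 \<le> i" "square_at y i"
  using square_at_within_4[OF assms, of 1] by auto

lemma exists_square_of_letter:
  assumes pf: "power_free (7/3) y"
  shows "\<exists>k\<ge>1. square_at y k \<and> y k = x"
proof -
  obtain i where i: "1 \<le> i" "square_at y i"
    using exists_square_at[OF pf] .
  obtain d where "square_at y (i + d)" "y (i + d) \<noteq> y i"
    using next_square_at[OF pf i] by blast
  then show ?thesis
    using i by (metis le_add1 order_trans)
qed

lemma exists_letter_then_complement:
  assumes pf: "power_free (7/3) y"
  shows "\<exists>k\<ge>1. y k = x \<and> y (Suc k) = (\<not> x)"
proof -
  obtain k where k: "1 \<le> k" "square_at y k" "y k = x"
    using exists_square_of_letter[OF pf] by blast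
  obtain d where "d = 2 \<or> d = 4" "\<And>e. 0 < e \<Longrightarrow> e < d \<Longrightarrow> \<not> square_at y (k + e)"
    using next_square_at[OF pf k(1,2)] by blast
  then have "\<not> square_at y (Suc k)"
    by fastforce
  then show ?thesis
    using k unfolding square_at_def by (intro exI[of _ "Suc k"]) auto
qed

lemma exists_square_followed_by_gap:
  assumes pf: "power_free (7/3) y"
  shows "\<exists>i\<ge>1. square_at y i \<and> \<not> square_at y (i + 2)"
proof (rule ccontr)
  assume no_gap: "\<not> ?thesis"
  have step: "square_at y (j + 2) \<and> y (j + 2) \<noteq> y j" if sq: "1 \<le> j" "square_at y j" for j
  proof -
    obtain d where d: "d = 2 \<or> d = 4" "y (j + d) \<noteq> y j"
      and gap: "\<And>e. 0 < e \<Longrightarrow> e < d \<Longrightarrow> \<not> square_at y (j + e)"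
      using next_square_at[OF pf sq] by blast
    have "square_at y (j + 2)"
      using sq no_gap by blast
    then show ?thesis
      using d gap[of 2] by auto
  qed
  have period4: "y (j + 4) = y j \<and> y (j + 5) = y (j + 1)" if "1 \<le> j" "square_at y j" for j
  proof -
    have "square_at y (j + 2)" "y (j + 2) \<noteq> y j" "y (j + 2 + 2) \<noteq> y (j + 2)" "square_at y (j + 2 + 2)"
      using step[OF that] step[of "j + 2"] that(1) by auto
    then show ?thesis
      using that(2) unfolding square_at_def by (simp add: eval_nat_numeral)
  qed
  obtain i where i: "1 \<le> i" "square_at y i"
    using exists_square_at[OF pf] .
  have squares: "square_at y (i + 2 * k)" for k
    by (induction k) (use i step in \<open>auto simp: add.assoc\<close>)
  have "has_period y i 10 4"
    unfolding has_period_def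
  proof (intro allI impI)
    fix t :: nat
    define m where "m = t div 2"
    have t: "t = 2 * m \<or> t = 2 * m + 1"
      unfolding m_def by arith
    have shift: "y (i + 2 * m + 4) = y (i + 2 * m) \<and> y (i + 2 * m + 5) = y (i + 2 * m + 1)"
      using period4 squares[of m] i(1) by simp
    from t show "y (i + t) = y (i + t + 4)"
    proof
      assume "t = 2 * m + 1"
      then have "i + t = i + 2 * m + 1" "i + t + 4 = i + 2 * m + 5"
        by simp_all
      then show ?thesis
        using shift by metis
    qed (use shift in simp)
  qed
  then show False
    using periodic_factor_short_73[OF pf, of 4 i 10] by simp
qed

lemma exists_letter_complement_letter:
  assumes pf: "power_free (7/3) y"
  shows "\<exists>k\<ge>1. y k = x \<and> y (k + 1) = (\<not> x) \<and> y (k + 2) = x"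
proof -
  obtain i where i: "1 \<le> i" "square_at y i" "\<not> square_at y (i + 2)"
    using exists_square_followed_by_gap[OF pf] by blast
  obtain d where "d = 2 \<or> d = 4" "square_at y (i + d)"
    and gap: "\<And>e. 0 < e \<Longrightarrow> e < d \<Longrightarrow> \<not> square_at y (i + e)"
    using next_square_at[OF pf i(1,2)] by blast
  then have "d = 4"
    using i(3) by auto
  then have "y (i + 1) \<noteq> y (i + 2)" "y (i + 2) \<noteq> y (i + 3)" "y (i + 3) \<noteq> y (i + 4)"
    using gap[of 1] gap[of 2] gap[of 3] unfolding square_at_def by (simp_all add: eval_nat_numeral)
  then consider "y (i + 1) = x" "y (i + 2) = (\<not> x)" "y (i + 3) = x"
    | "y (i + 2) = x" "y (i + 3) = (\<not> x)" "y (i + 4) = x"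
    by blast
  then show ?thesis
  proof cases
    case 1
    then show ?thesis
      using i(1) by (intro exI[of _ "i + 1"]) (simp add: eval_nat_numeral)
  next
    case 2
    then show ?thesis
      using i(1) by (intro exI[of _ "i + 2"]) (simp add: eval_nat_numeral)
  qed
qed

lemma factor_5_same_parity:
  assumes pf: "power_free (7/3) y" and "1 \<le> i" "1 \<le> j"
    and same: "\<And>t. t < 5 \<Longrightarrow> y (i + t) = y (j + t)"
  shows "even i = even j"
proof -
  obtain r where r: "r < 4" "square_at y (i + r)"
    using square_at_within_4[OF pf] by blast
  have "square_at y (j + r)"
    using r same[of r] same[of "Suc r"] unfolding square_at_def by simp
  moreover have "1 \<le> i + r" "1 \<le> j + r"
    using assms(2,3) by simp_all
  ultimately have "even (i + r) = even (j + r)"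
    using square_at_same_parity[OF pf _ _ r(2)] by blast
  then show ?thesis
    by simp argo
qed

section \<open>Images under morphisms\<close>

lemma morph_apply_Nil [simp]: "morph_apply h [] = []"
  by (simp add: morph_apply_def)

lemma morph_apply_Cons [simp]: "morph_apply h (a # u) = h a @ morph_apply h u"
  by (simp add: morph_apply_def)

lemma morph_apply_append [simp]: "morph_apply h (u @ v) = morph_apply h u @ morph_apply h v"
  by (simp add: morph_apply_def)

lemma morph_apply_concat_replicate:
  "morph_apply h (concat (replicate n u)) = concat (replicate n (morph_apply h u))"
  by (induction n) auto

lemma prefix_morph_apply: "prefix u v \<Longrightarrow> prefix (morph_apply h u) (morph_apply h v)"
  by (auto simp: prefix_def)

lemma length_morph_apply_ge:
  "(\<And>x. m \<le> length (h x)) \<Longrightarrow> m * length u \<le> length (morph_apply h u)"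
  by (induction u) (auto simp: add_mono)

lemma length_morph_apply_mu [simp]: "length (morph_apply mu u) = 2 * length u"
  by (induction u) (auto simp: mu_def)

lemma nth_morph_apply_mu:
  assumes "j < length u"
  shows "morph_apply mu u ! (2 * j) = u ! j" "morph_apply mu u ! (2 * j + 1) = (\<not> u ! j)"
  using assms by (induction u arbitrary: j) (auto simp: mu_def nth_Cons split: nat.split)

definition morph_comp :: "morphism \<Rightarrow> morphism \<Rightarrow> morphism" where
  "morph_comp g h = (\<lambda>x. morph_apply g (h x))"

lemma morph_apply_comp: "morph_apply (morph_comp g h) u = morph_apply g (morph_apply h u)"
  by (induction u) (auto simp: morph_comp_def)

lemma morph_apply_id: "morph_apply id_morph u = u"
  by (induction u) (auto simp: id_morph_def)

fun morph_pow :: "morphism \<Rightarrow> nat \<Rightarrow> morphism" where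
  "morph_pow h 0 = id_morph"
| "morph_pow h (Suc n) = morph_comp h (morph_pow h n)"

lemma length_morph_pow:
  assumes "\<And>x. 2 \<le> length (h x)"
  shows "2 ^ n \<le> length (morph_pow h n x)"
proof (induction n)
  case (Suc n)
  then show ?case
    using length_morph_apply_ge[of 2 h "morph_pow h n x"] assms by (simp add: morph_comp_def)
qed (simp add: id_morph_def)

lemma length_pref [simp]: "length (pref w n) = n"
  by (simp add: pref_def)

lemma nth_pref [simp]: "j < n \<Longrightarrow> pref w n ! j = w j"
  by (simp add: pref_def)

lemma pref_Suc: "pref w (Suc n) = pref w n @ [w n]"
  by (simp add: pref_def)

lemma pref_add: "pref w (m + n) = pref w m @ map w [m..<m + n]"
  unfolding pref_def using upt_add_eq_append[of 0 m n] by simp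

definition block_start :: "morphism \<Rightarrow> (nat \<Rightarrow> bool) \<Rightarrow> nat \<Rightarrow> nat" where
  "block_start h w k = length (morph_apply h (pref w k))"

lemma block_start_0 [simp]: "block_start h w 0 = 0"
  by (simp add: block_start_def pref_def)

lemma block_start_Suc: "block_start h w (Suc k) = block_start h w k + length (h (w k))"
  by (simp add: block_start_def pref_Suc)

lemma block_start_ge:
  assumes "\<And>x. m \<le> length (h x)"
  shows "k * m \<le> block_start h w k"
proof (induction k)
  case (Suc k)
  then show ?case
    using add_mono[OF assms[of "w k"] Suc] by (simp add: block_start_Suc add.commute)
qed simp

lemma block_start_even: "(\<And>x. even (length (h x))) \<Longrightarrow> even (block_start h w k)"
  by (induction k) (auto simp: block_start_Suc)

lemma block_start_add_letters:
  assumes "\<And>j. j < d \<Longrightarrow> w (k + j) = z"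
  shows "block_start h w (k + d) = block_start h w k + d * length (h z)"
  using assms by (induction d) (simp_all add: block_start_Suc)

(* For erasing \<open>h\<close> this only constrains a finite prefix of \<open>y\<close>. *)
definition is_image :: "morphism \<Rightarrow> (nat \<Rightarrow> bool) \<Rightarrow> (nat \<Rightarrow> bool) \<Rightarrow> bool" where
  "is_image h w y \<longleftrightarrow> (\<forall>n. morph_apply h (pref w n) = pref y (block_start h w n))"

lemma is_imageD:
  assumes img: "is_image h w y" and x: "w k = x" and j: "j < length (h x)"
  shows "y (block_start h w k + j) = h x ! j"
proof -
  have "pref y (block_start h w (Suc k)) = morph_apply h (pref w k) @ h x"
    using img[unfolded is_image_def, rule_format, of "Suc k"] x by (simp add: pref_Suc)
  moreover have "block_start h w k + j < block_start h w (Suc k)"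
    using j x by (simp add: block_start_Suc)
  ultimately show ?thesis
    using nth_pref[of "block_start h w k + j" "block_start h w (Suc k)" y]
    by (simp add: nth_append block_start_def)
qed

lemma is_imageI:
  assumes "\<And>k j. j < length (h (w k)) \<Longrightarrow> y (block_start h w k + j) = h (w k) ! j"
  shows "is_image h w y"
  unfolding is_image_def
proof
  fix n
  show "morph_apply h (pref w n) = pref y (block_start h w n)"
  proof (induction n)
    case (Suc n)
    have "map y [block_start h w n..<block_start h w n + length (h (w n))] = h (w n)"
      by (rule nth_equalityI) (simp_all add: assms)
    then show ?case
      using Suc by (simp add: pref_Suc block_start_Suc pref_add)
  qed (simp add: pref_def)
qed

lemma is_image_comp:
  assumes "is_image g v w" "is_image h w z"
  shows "is_image (morph_comp h g) v z"
proof -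
  have "morph_apply (morph_comp h g) (pref v n) = pref z (block_start h w (block_start g v n))" for n
    using assms unfolding is_image_def by (simp add: morph_apply_comp)
  then show ?thesis
    unfolding is_image_def by (simp add: block_start_def)
qed

lemma is_image_pow:
  assumes "is_image h w w"
  shows "is_image (morph_pow h n) w w"
proof (induction n)
  case 0
  show ?case
    unfolding is_image_def block_start_def by (simp add: morph_apply_id)
qed (simp add: is_image_comp[OF _ assms])

lemma fixed_point_is_image:
  assumes "fixed_point h w"
  shows "is_image h w w"
  unfolding is_image_def
proof
  fix n
  obtain zs where "pref w (block_start h w n) = morph_apply h (pref w n) @ zs"
    using assms unfolding fixed_point_def block_start_def by (blast elim: prefixE)
  moreover have "zs = []"
    using arg_cong[OF calculation, of length] by (simp add: block_start_def)
  ultimately show "morph_apply h (pref w n) = pref w (block_start h w n)"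
    by simp
qed

lemma is_image_fixed_point:
  assumes "is_image h w w" and nonerasing: "\<And>x. h x \<noteq> []"
  shows "fixed_point h w"
proof -
  have "N \<le> block_start h w N" for N
    using block_start_ge[of 1 h N w] nonerasing by (simp add: Suc_le_eq)
  then show ?thesis
    using assms(1) unfolding fixed_point_def is_image_def block_start_def by auto
qed

lemma subword_of_morph_apply:
  assumes img: "is_image h v z" and "subword_of u v"
  shows "subword_of (morph_apply h u) z"
proof -
  obtain i where "u = map v [i..<i + length u]"
    using assms(2) unfolding subword_of_def by blast
  then have "pref v (i + length u) = pref v i @ u"
    by (simp add: pref_add)
  have "pref z (block_start h v (i + length u)) = morph_apply h (pref v (i + length u))"
    using img by (simp add: is_image_def)
  also have "\<dots> = morph_apply h (pref v i) @ morph_apply h u"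
    using \<open>pref v (i + length u) = pref v i @ u\<close> by simp
  also have "\<dots> = pref z (block_start h v i) @ morph_apply h u"
    using img by (simp add: is_image_def)
  finally have "pref z (block_start h v (i + length u)) = pref z (block_start h v i) @ morph_apply h u" .
  moreover have "block_start h v (i + length u) = block_start h v i + length (morph_apply h u)"
    using arg_cong[OF calculation, of length] by simp
  ultimately have "morph_apply h u = map z [block_start h v i..<block_start h v i + length (morph_apply h u)]"
    by (simp add: pref_add)
  then show ?thesis
    unfolding subword_of_def by blast
qed

lemma length_morph_apply_uniform:
  "(\<And>a. length (h a) = m) \<Longrightarrow> length (morph_apply h u) = m * length u"
  by (induction u) auto

lemma is_power_morph_apply_uniform:
  assumes uniform: "\<And>a. length (h a) = m" and "0 < m" and "is_power u \<beta>"
  shows "is_power (morph_apply h u) \<beta>"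
proof -
  obtain x x' n where x: "x \<noteq> []" "prefix x' x" "u = concat (replicate n x) @ x'"
    "of_nat n + of_nat (length x') / of_nat (length x) = \<beta>"
    using assms(3) unfolding is_power_def by blast
  show ?thesis
    unfolding is_power_def
  proof (intro exI conjI)
    have "length (morph_apply h x) = m * length x"
      using uniform by (rule length_morph_apply_uniform)
    then show "morph_apply h x \<noteq> []"
      using x(1) \<open>0 < m\<close> by auto
    show "prefix (morph_apply h x') (morph_apply h x)"
      using x(2) by (rule prefix_morph_apply)
    show "morph_apply h u = concat (replicate n (morph_apply h x)) @ morph_apply h x'"
      using x(3) by (simp add: morph_apply_concat_replicate)
    show "of_nat n + of_nat (length (morph_apply h x')) / of_nat (length (morph_apply h x)) = \<beta>"
      using x(4) \<open>0 < m\<close> uniform by (simp add: length_morph_apply_uniform)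
  qed
qed

lemma power_free_shift:
  assumes "power_free \<alpha> y"
  shows "power_free \<alpha> (\<lambda>i. y (i + q))"
proof -
  have "subword_of u y" if sub: "subword_of u (\<lambda>i. y (i + q))" for u
  proof -
    obtain i where "u = map (\<lambda>i. y (i + q)) [i..<i + length u]"
      using sub unfolding subword_of_def by blast
    also have "\<dots> = map y [i + q..<i + q + length u]"
      by (rule nth_equalityI) (simp_all add: ac_simps)
    finally show ?thesis
      unfolding subword_of_def by blast
  qed
  then show ?thesis
    using assms unfolding power_free_def by blast
qed

lemma power_free_uniform_preimage:
  assumes "power_free \<alpha> z" "is_image h v z" "\<And>a. length (h a) = m" "0 < m"
  shows "power_free \<alpha> v"
  unfolding power_free_def
proof (intro allI impI notI)
  fix u \<beta>
  assume "subword_of u v \<and> \<alpha> \<le> \<beta>" "is_power u \<beta>"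
  then have "subword_of (morph_apply h u) z" "is_power (morph_apply h u) \<beta>" "\<alpha> \<le> \<beta>"
    using subword_of_morph_apply[OF assms(2)] is_power_morph_apply_uniform[OF assms(3,4)] by auto
  then show False
    using assms(1) unfolding power_free_def by blast
qed

lemma block_start_mu: "block_start mu v k = 2 * k"
  by (simp add: block_start_def)

lemma is_image_mu_iff: "is_image mu v z \<longleftrightarrow> (\<forall>i. z (2 * i) = v i \<and> z (2 * i + 1) = (\<not> v i))"
proof
  assume "is_image mu v z"
  then show "\<forall>i. z (2 * i) = v i \<and> z (2 * i + 1) = (\<not> v i)"
    using is_imageD[of mu v z _ _ 0] is_imageD[of mu v z _ _ 1] by (simp add: block_start_mu mu_def)
next
  assume "\<forall>i. z (2 * i) = v i \<and> z (2 * i + 1) = (\<not> v i)"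
  then show "is_image mu v z"
    by (intro is_imageI) (auto simp: block_start_mu mu_def less_Suc_eq)
qed

definition decimate_morph :: "morphism \<Rightarrow> nat \<Rightarrow> morphism" where
  "decimate_morph h q x = map (\<lambda>j. h x ! (2 * j + q)) [0..<length (h x) div 2]"

lemma is_image_decimate_morph:
  assumes img: "is_image h w y" and even: "\<And>x. even (length (h x))" and "q \<le> 1"
  shows "is_image (decimate_morph h q) w (\<lambda>j. y (2 * j + q))"
proof (rule is_imageI)
  have half: "block_start (decimate_morph h q) w k = block_start h w k div 2" for k
    by (induction k) (auto simp: block_start_Suc decimate_morph_def even block_start_even[OF even])
  fix k j
  assume j: "j < length (decimate_morph h q (w k))"
  then have "2 * j + q < length (h (w k))"
    using even \<open>q \<le> 1\<close> unfolding decimate_morph_def by (auto elim!: evenE)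
  moreover have "2 * (block_start h w k div 2 + j) + q = block_start h w k + (2 * j + q)"
    using block_start_even[OF even] by (auto elim!: evenE)
  ultimately show "y (2 * (block_start (decimate_morph h q) w k + j) + q) = decimate_morph h q (w k) ! j"
    using is_imageD[OF img refl, of "2 * j + q"] j half unfolding decimate_morph_def
    by (simp add: add.assoc)
qed

lemma power_free_decimation:
  assumes "power_free \<alpha> y" and alt: "\<And>i. y (2 * i + q) \<noteq> y (2 * i + q + 1)"
  shows "power_free \<alpha> (\<lambda>i. y (2 * i + q))"
proof (rule power_free_uniform_preimage)
  show "power_free \<alpha> (\<lambda>i. y (i + q))"
    using assms(1) by (rule power_free_shift)
  show "is_image mu (\<lambda>i. y (2 * i + q)) (\<lambda>i. y (i + q))"
    unfolding is_image_mu_iff using alt by (simp add: ac_simps)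
qed (auto simp: mu_def)

section \<open>Parity of block positions\<close>

lemma block_start_pos:
  assumes "\<And>x. h x \<noteq> []" and "1 \<le> k"
  shows "1 \<le> block_start h w k"
  using block_start_ge[of 1 h k w] assms by (simp add: Suc_le_eq)

lemma block_start_parity_of_long_image:
  assumes pf: "power_free (7/3) y" and img: "is_image h w y" and nonerasing: "\<And>x. h x \<noteq> []"
    and long: "5 \<le> length (h x)"
    and "1 \<le> k" "1 \<le> k'" "w k = x" "w k' = x"
  shows "even (block_start h w k) = even (block_start h w k')"
proof (rule factor_5_same_parity[OF pf])
  show "1 \<le> block_start h w k" "1 \<le> block_start h w k'"
    using block_start_pos[of h, OF nonerasing] assms(5,6) by auto
  show "y (block_start h w k + t) = y (block_start h w k' + t)" if "t < 5" for t
    using is_imageD[OF img \<open>w k = x\<close>] is_imageD[OF img \<open>w k' = x\<close>] that long by simp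
qed

lemma even_image_length:
  assumes pf: "power_free (7/3) w"
    and parity: "\<And>k k'. 1 \<le> k \<Longrightarrow> 1 \<le> k' \<Longrightarrow> w k = x \<Longrightarrow> w k' = x \<Longrightarrow>
      even (block_start h w k) = even (block_start h w k')"
  shows "even (length (h x))"
proof -
  obtain k where k: "1 \<le> k" "square_at w k" "w k = x"
    using exists_square_of_letter[OF pf] by blast
  then have "w (Suc k) = x"
    unfolding square_at_def by simp
  then have "even (block_start h w k) = even (block_start h w (Suc k))"
    using parity[OF k(1) _ k(3)] by simp
  then show ?thesis
    using k(3) by (simp add: block_start_Suc) argo
qed

lemma image_alternates:
  assumes pfw: "power_free (7/3) w" and pf: "power_free (7/3) y" and img: "is_image h w y"
    and long: "\<And>x. 2 \<le> length (h x)" and even: "\<And>k. even (block_start h w k)"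
  obtains q where "q \<le> 1" "\<And>i. y (2 * i + q) \<noteq> y (2 * i + q + 1)"
proof -
  obtain d where d: "1 \<le> d" "square_at y d"
    using exists_square_at[OF pf] .
  have no_square: "\<not> square_at y i" if "1 \<le> i" "even i \<noteq> even d" for i
    using square_at_same_parity[OF pf that(1) d(1) _ d(2)] that(2) by blast
  show ?thesis
  proof (cases "even d")
    case True
    show ?thesis
    proof (rule that[of 1])
      show "y (2 * i + 1) \<noteq> y (2 * i + 1 + 1)" for i
        using no_square[of "2 * i + 1"] True unfolding square_at_def by simp
    qed simp
  next
    case False
    have "\<not> square_at y 0"
    proof
      assume "square_at y 0"
      obtain k where k: "1 \<le> k" "w k = w 0"
        using exists_square_of_letter[OF pfw] by blast
      have lens: "0 < length (h (w 0))" "1 < length (h (w 0))"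
        using long[of "w 0"] by linarith+
      have "y (block_start h w k) = y 0" "y (block_start h w k + 1) = y 1"
        using is_imageD[OF img k(2) lens(1)] is_imageD[OF img k(2) lens(2)]
          is_imageD[OF img refl lens(1)] is_imageD[OF img refl lens(2)] by simp_all
      then have "square_at y (block_start h w k)"
        using \<open>square_at y 0\<close> unfolding square_at_def by simp
      moreover have "1 \<le> block_start h w k"
        using block_start_ge[of 2 h k w] long k(1) by simp
      ultimately show False
        using no_square[of "block_start h w k"] False even[of k] by simp
    qed
    then have "\<not> square_at y (2 * i)" for i
      using no_square[of "2 * i"] False by (cases i) auto
    show ?thesis
    proof (rule that[of 0])
      show "y (2 * i + 0) \<noteq> y (2 * i + 0 + 1)" for i
        using \<open>\<not> square_at y (2 * i)\<close> unfolding square_at_def by simp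
    qed simp
  qed
qed

lemma is_image_last:
  assumes img: "is_image h w y" and "h (w k) \<noteq> []"
  shows "y (block_start h w (Suc k) - 1) = last (h (w k))"
proof -
  have "0 < length (h (w k))"
    using assms(2) by simp
  then have "block_start h w (Suc k) - 1 = block_start h w k + (length (h (w k)) - 1)"
    unfolding block_start_Suc by linarith
  then show ?thesis
    using is_imageD[OF img refl, of "length (h (w k)) - 1"] assms(2) by (simp add: last_conv_nth)
qed

(* The factor \<open>e h(x) h(x)\<close> of \<open>y\<close> that comes from a square \<open>x x\<close> in \<open>w\<close>. *)
lemma image_square_period:
  assumes img: "is_image h w y" and nonerasing: "\<And>x. h x \<noteq> []" and last: "\<And>x. last (h x) = e"
    and k: "1 \<le> k" "w k = x" "w (Suc k) = x"
  shows "has_period y (block_start h w k - 1) (2 * length (h x) + 1) (length (h x))"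
  unfolding has_period_def
proof (intro allI impI)
  define L where "L = length (h x)"
  define i where "i = block_start h w k - 1"
  have i: "i + 1 = block_start h w k"
    using block_start_pos[of h k w, OF nonerasing k(1)] unfolding i_def by simp
  fix t
  assume "t + length (h x) < 2 * length (h x) + 1"
  then have t: "t + L < 2 * L + 1"
    unfolding L_def .
  show "y (i + t) = y (i + t + L)"
  proof (cases t)
    case 0
    have "y i = e"
      using is_image_last[OF img nonerasing, of "k - 1"] k(1) last i unfolding i_def by simp
    moreover have "i + L = block_start h w (Suc k) - 1"
      using i k(2) unfolding L_def block_start_Suc by simp
    then have "y (i + L) = e"
      using is_image_last[OF img nonerasing, of k] last by simp
    ultimately show ?thesis
      using 0 by simp
  next
    case (Suc t')
    then have "t' < L"
      using t by simp
    have shift: "i + t = block_start h w k + t'" "i + t + L = block_start h w (Suc k) + t'"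
      using Suc i k(2) unfolding L_def block_start_Suc by simp_all
    have "y (i + t) = h x ! t'"
      using is_imageD[OF img k(2), of t'] \<open>t' < L\<close> shift(1) unfolding L_def by simp
    moreover have "y (i + t + L) = h x ! t'"
      using is_imageD[OF img k(3), of t'] \<open>t' < L\<close> shift(2) unfolding L_def by simp
    ultimately show ?thesis
      by simp
  qed
qed

lemma common_last_letter_long_images:
  assumes pfw: "power_free (7/3) w" and pf: "power_free (7/3) y" and img: "is_image h w y"
    and nonerasing: "\<And>x. h x \<noteq> []" and last: "\<And>x. last (h x) = e"
  shows "4 \<le> length (h x)"
proof -
  obtain k where k: "1 \<le> k" "w k = x" "w (Suc k) = x"
    using exists_square_of_letter[OF pfw, of x] unfolding square_at_def by auto
  have "0 < length (h x)"
    using nonerasing by simp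
  then have "3 * (2 * length (h x) + 1) < 7 * length (h x)"
    using periodic_factor_short_73[OF pf _ image_square_period[OF img nonerasing last k]] by blast
  then show ?thesis
    by simp
qed

lemma image_letters_alternate:
  assumes img: "is_image h w y" and even: "even (block_start h w k)" and "w k = x"
    and alt: "\<And>i. y (2 * i) \<noteq> y (2 * i + 1)"
    and "even j" "j + 1 < length (h x)"
  shows "h x ! j \<noteq> h x ! (j + 1)"
proof -
  have "even (block_start h w k + j)"
    using even \<open>even j\<close> by simp
  then obtain i where "block_start h w k + j = 2 * i"
    by (rule evenE)
  then show ?thesis
    using alt[of i] is_imageD[OF img \<open>w k = x\<close>, of j] is_imageD[OF img \<open>w k = x\<close>, of "j + 1"]
      \<open>j + 1 < length (h x)\<close> by (simp add: add.assoc)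
qed

lemma block_start_parity_of_common_last_letter:
  assumes pf: "power_free (7/3) y" and img: "is_image h w y" and nonerasing: "\<And>x. h x \<noteq> []"
    and last: "\<And>x. last (h x) = e" and long: "\<And>x. 4 \<le> length (h x)"
    and "1 \<le> k" "1 \<le> k'" "w k = x" "w k' = x"
  shows "even (block_start h w k) = even (block_start h w k')"
proof -
  have window: "y (block_start h w j - 1 + t) = (e # h x) ! t" if "1 \<le> j" "w j = x" "t < 5" for j t
  proof (cases t)
    case 0
    then show ?thesis
      using is_image_last[OF img nonerasing, of "j - 1"] that(1,2) last by simp
  next
    case (Suc t')
    moreover have "1 \<le> block_start h w j"
      using block_start_pos[of h, OF nonerasing that(1)] .
    ultimately show ?thesis
      using is_imageD[OF img that(2), of t'] long[of x] that(3) by simp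
  qed
  have "k * 4 \<le> block_start h w k" "k' * 4 \<le> block_start h w k'"
    by (rule block_start_ge[OF long])+
  then have four: "4 \<le> block_start h w k" "4 \<le> block_start h w k'"
    using assms(6,7) by linarith+
  have "y (block_start h w k - 1 + t) = y (block_start h w k' - 1 + t)" if "t < 5" for t
    using window[of k t] window[of k' t] that assms(6-9) by simp
  then have "even (block_start h w k - 1) = even (block_start h w k' - 1)"
    using factor_5_same_parity[OF pf, of "block_start h w k - 1" "block_start h w k' - 1"] four
    by simp
  then show ?thesis
    using four by simp
qed

lemma last_decimate_morph:
  assumes pfw: "power_free (7/3) w" and img: "is_image h w y"
    and even_length: "\<And>x. even (length (h x))" and long: "2 \<le> length (h x)"
    and q: "q \<le> 1" and alt: "\<And>i. y (2 * i + q) \<noteq> y (2 * i + q + 1)"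
  shows "last (decimate_morph h q x) = (if q = 1 then last (h x) else \<not> last (h x))"
proof -
  have "2 * (length (h x) div 2 - 1) + q = length (h x) - 2 + q"
    using long even_length[of x] by presburger
  then have last_h': "last (decimate_morph h q x) = h x ! (length (h x) - 2 + q)"
    using long unfolding decimate_morph_def by (simp add: last_conv_nth)
  have "length (h x) - 2 + 1 = length (h x) - 1" "h x \<noteq> []"
    using long by auto
  then have last_h: "h x ! (length (h x) - 2 + 1) = last (h x)"
    by (simp add: last_conv_nth)
  consider "q = 1" | "q = 0"
    using q by linarith
  then show ?thesis
  proof cases
    case 1
    then show ?thesis
      using last_h' last_h by simp
  next
    case 2
    obtain k where "w k = x"
      using exists_square_of_letter[OF pfw, of x] by blast
    then have "h x ! (length (h x) - 2) \<noteq> h x ! (length (h x) - 2 + 1)"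
      using image_letters_alternate[OF img block_start_even[OF even_length]] alt 2
        long even_length[of x] by simp
    then show ?thesis
      using last_h' last_h 2 by simp
  qed
qed

(* Descent on \<open>|h 0| + |h 1|\<close>: the images are long, so their block starts have constant parity,
   and decimating along the resulting alternation halves the images while keeping a common last
   letter. *)
lemma no_image_with_common_last_letter:
  assumes pfw: "power_free (7/3) w" and "power_free (7/3) y" "is_image h w y"
    and "\<And>x. h x \<noteq> []" "\<And>x. last (h x) = e"
  shows False
  using assms(2-)
proof (induction "length (h False) + length (h True)" arbitrary: h y e rule: less_induct)
  case less
  note pf = less.prems(1) and img = less.prems(2) and nonerasing = less.prems(3)
    and last = less.prems(4)
  have long: "4 \<le> length (h x)" for x
    using common_last_letter_long_images[OF pfw pf img nonerasing last] .
  have long2: "2 \<le> length (h x)" for x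
    using long[of x] by simp
  have even_length: "even (length (h x))" for x
    using even_image_length[OF pfw block_start_parity_of_common_last_letter[OF pf img nonerasing last long]] .
  obtain q where q: "q \<le> 1" and alt: "\<And>i. y (2 * i + q) \<noteq> y (2 * i + q + 1)"
    using image_alternates[OF pfw pf img long2 block_start_even[OF even_length]] by blast
  define h' where "h' = decimate_morph h q"
  have length': "length (h' x) = length (h x) div 2" for x
    unfolding h'_def decimate_morph_def by simp
  show False
  proof (rule less.hyps)
    show "length (h' False) + length (h' True) < length (h False) + length (h True)"
      using long[of False] long[of True] length' by simp
    show "power_free (7/3) (\<lambda>i. y (2 * i + q))"
      using power_free_decimation[OF pf alt] .
    show "is_image h' w (\<lambda>i. y (2 * i + q))"
      unfolding h'_def using is_image_decimate_morph[OF img even_length q] .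
    show "h' x \<noteq> []" for x
      using long[of x] length'[of x] by auto
    show "last (h' x) = (if q = 1 then e else \<not> e)" for x
      unfolding h'_def using last_decimate_morph[OF pfw img even_length long2 q alt] last by simp
  qed
qed

section \<open>Fixed points of non-identity morphisms\<close>

lemma erased_letter_periodic:
  assumes pf: "power_free (7/3) w" and img: "is_image h w w" and z: "h z = []"
    and L: "0 < length (h (\<not> z))"
  shows "w t = h (\<not> z) ! (t mod length (h (\<not> z)))"
proof -
  define x where "x = (\<not> z)"
  define L where "L = length (h x)"
  have next_x: "\<exists>k'. w k' = x \<and> block_start h w k' = block_start h w k" for k
  proof -
    obtain d where d: "w (k + d) = x" "\<And>j. j < d \<Longrightarrow> w (k + j) = (\<not> x)"
      using letter_within_2[OF pf] by blast
    then show ?thesis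
      using block_start_add_letters[of d w k "\<not> x" h] z unfolding x_def by auto
  qed
  have blocks: "\<exists>k. w k = x \<and> block_start h w k = m * L" for m
  proof (induction m)
    case 0
    then show ?case
      using next_x[of 0] by simp
  next
    case (Suc m)
    then obtain k where "w k = x" "block_start h w k = m * L"
      by blast
    then have "block_start h w (Suc k) = Suc m * L"
      unfolding L_def by (simp add: block_start_Suc)
    then show ?case
      using next_x[of "Suc k"] by metis
  qed
  obtain k where "w k = x" "block_start h w k = t div L * L"
    using blocks by blast
  then show ?thesis
    using is_imageD[OF img, of k x "t mod L"] L unfolding L_def x_def by simp
qed

(* Erasing a letter would make \<open>w = h(w)\<close> purely periodic with period \<open>|h(\<not>z)|\<close>. *)
lemma fixed_point_nonerasing:
  assumes pf: "power_free (7/3) w" and fp: "fixed_point h w"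
  shows "h z \<noteq> []"
proof
  assume z: "h z = []"
  define L where "L = length (h (\<not> z))"
  have "0 < L"
  proof (rule ccontr)
    assume "\<not> 0 < L"
    then have "h a = []" for a
      using z unfolding L_def by (cases "a = z") auto
    then have "block_start h w n = 0" for n
      by (induction n) (simp_all add: block_start_Suc)
    then show False
      using fp unfolding fixed_point_def block_start_def by (metis Suc_n_not_le_n)
  qed
  then have "has_period w 0 (3 * L) L"
    using erased_letter_periodic[OF pf fixed_point_is_image[OF fp] z] unfolding has_period_def L_def
    by simp
  then have "3 * (3 * L) < 7 * L"
    by (rule periodic_factor_short_73[OF pf \<open>0 < L\<close>])
  then show False
    by simp
qed

lemma fixed_point_length_one_id:
  assumes pf: "power_free (7/3) w" and img: "is_image h w w" and one: "\<And>x. length (h x) = 1"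
  shows "h = id_morph"
proof
  fix x
  have "block_start h w k = k" for k
    by (induction k) (simp_all add: block_start_Suc one)
  moreover obtain k where "w k = x"
    using exists_square_of_letter[OF pf, of x] by blast
  ultimately have "h x ! 0 = x"
    using is_imageD[OF img, of k x 0] one[of x] by simp
  then show "h x = id_morph x"
    using one[of x] unfolding id_morph_def by (cases "h x") auto
qed

lemma morph_pow_fixed_letter:
  assumes "h z = [z]"
  shows "morph_pow h n z = [z]"
  by (induction n) (simp_all add: id_morph_def morph_comp_def assms)

lemma morph_pow_growing_letter:
  assumes z: "h z = [z]" and x: "h (\<not> z) = (\<not> z) # v" "v \<noteq> []"
  shows "\<exists>u. morph_pow h n (\<not> z) = (\<not> z) # u \<and> n \<le> length u"
proof (induction n)
  case 0
  then show ?case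
    by (simp add: id_morph_def)
next
  case (Suc n)
  then obtain u where u: "morph_pow h n (\<not> z) = (\<not> z) # u" "n \<le> length u"
    by blast
  have "1 \<le> length (h a)" for a
    using z x by (cases "a = z") auto
  then have "length u \<le> length (morph_apply h u)"
    using length_morph_apply_ge[of 1 h u] by simp
  moreover have "0 < length v"
    using x(2) by simp
  ultimately have "Suc n \<le> length (v @ morph_apply h u)"
    using u(2) unfolding length_append by linarith
  moreover have "morph_pow h (Suc n) (\<not> z) = (\<not> z) # v @ morph_apply h u"
    using u(1) x(1) by (simp add: morph_comp_def)
  ultimately show ?case
    by blast
qed

(* For \<open>g = h\<^sup>4\<close> the blocks of \<open>x = \<not>z\<close> start at positions of one parity, yet both
   \<open>x x\<close> and \<open>x z x\<close> occur in \<open>w\<close>. *)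
lemma fixed_point_no_fixed_letter:
  assumes pf: "power_free (7/3) w" and img: "is_image h w w"
    and z: "h z = [z]" and long: "2 \<le> length (h (\<not> z))"
  shows False
proof -
  define x where "x = (\<not> z)"
  have x_first: "h x ! 0 = x"
  proof -
    obtain d where d: "w (0 + d) = x" "\<And>j. j < d \<Longrightarrow> w (0 + j) = (\<not> x)"
      using letter_within_2[OF pf] by blast
    then have "block_start h w d = d"
      using block_start_add_letters[of d w 0 "\<not> x" h] z unfolding x_def by simp
    moreover have "0 < length (h x)"
      using long unfolding x_def by linarith
    ultimately show ?thesis
      using is_imageD[OF img d(1)[unfolded add_0], of 0] d(1) by simp
  qed
  then obtain v where v: "h x = x # v"
    using long unfolding x_def by (cases "h (\<not> z)") auto
  have "v \<noteq> []"
    using long v unfolding x_def by auto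
  define g where "g = morph_pow h 4"
  have gz: "g z = [z]"
    unfolding g_def using morph_pow_fixed_letter[of h z, OF z] .
  have g_long: "5 \<le> length (g x)"
    using morph_pow_growing_letter[of h z, OF z v[unfolded x_def] \<open>v \<noteq> []\<close>, of 4] unfolding g_def x_def
    by auto
  have g_nonerasing: "g a \<noteq> []" for a
    using gz g_long unfolding x_def by (cases "a = z") auto
  have img_g: "is_image g w w"
    unfolding g_def using is_image_pow[OF img] .
  have even: "even (length (g x))"
    using even_image_length[OF pf block_start_parity_of_long_image[OF pf img_g g_nonerasing g_long]] .
  obtain k where k: "1 \<le> k" "w k = x" "w (k + 1) = (\<not> x)" "w (k + 2) = x"
    using exists_letter_complement_letter[OF pf, of x] by blast
  have "block_start g w (k + 2) = block_start g w k + length (g x) + 1"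
    using k(2,3) gz unfolding x_def by (simp add: block_start_Suc numeral_2_eq_2)
  moreover have "even (block_start g w k) = even (block_start g w (k + 2))"
    using block_start_parity_of_long_image[OF pf img_g g_nonerasing g_long k(1) _ k(2) k(4)] by simp
  ultimately show False
    using even by simp
qed

lemma fixed_point_square_long:
  assumes pf: "power_free (7/3) w" and fp: "fixed_point h w" and "h \<noteq> id_morph"
  shows "2 \<le> length (morph_comp h h x)"
proof -
  have img: "is_image h w w"
    using fixed_point_is_image[OF fp] .
  have nonerasing: "1 \<le> length (h a)" for a
    using fixed_point_nonerasing[OF pf fp, of a] by (simp add: Suc_le_eq)
  have not_all_one: "\<not> (length (h a) = 1 \<and> length (h (\<not> a)) = 1)" for a
  proof
    assume "length (h a) = 1 \<and> length (h (\<not> a)) = 1"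
    then have "length (h b) = 1" for b
      by (cases "b = a") auto
    then show False
      using fixed_point_length_one_id[OF pf img] \<open>h \<noteq> id_morph\<close> by blast
  qed
  have not_fixed: "h a \<noteq> [a]" for a
  proof
    assume "h a = [a]"
    moreover have "2 \<le> length (h (\<not> a))"
      using not_all_one[of a] nonerasing[of "\<not> a"] \<open>h a = [a]\<close> by simp
    ultimately show False
      using fixed_point_no_fixed_letter[OF pf img] by blast
  qed
  show ?thesis
  proof (cases "2 \<le> length (h x)")
    case True
    then show ?thesis
      using length_morph_apply_ge[of 1 h "h x"] nonerasing by (simp add: morph_comp_def)
  next
    case False
    then obtain a where a: "h x = [a]"
      using nonerasing[of x] by (cases "h x") (auto simp: Suc_le_eq)
    then have "a = (\<not> x)"
      using not_fixed[of x] by auto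
    moreover have "2 \<le> length (h (\<not> x))"
      using not_all_one[of x] nonerasing[of "\<not> x"] a by simp
    ultimately show ?thesis
      using a by (simp add: morph_comp_def)
  qed
qed

(* The last letter of each block differs from the first letter of the next one; apply this to
   the factors \<open>11\<close> and \<open>01\<close> of \<open>w\<close>. *)
lemma odd_alternation_common_last_letter:
  assumes pfw: "power_free (7/3) w" and img: "is_image g w y" and nonerasing: "\<And>x. g x \<noteq> []"
    and even: "\<And>k. even (block_start g w k)" and alt: "\<And>i. y (2 * i + 1) \<noteq> y (2 * i + 2)"
  shows "last (g a) = last (g True)"
proof -
  have junction: "last (g (w k)) \<noteq> hd (g (w (Suc k)))" for k
  proof -
    obtain m where m: "block_start g w (Suc k) = 2 * m"
      using even[of "Suc k"] by (rule evenE)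
    moreover have "1 \<le> block_start g w (Suc k)"
      using block_start_pos[of g, OF nonerasing] by simp
    ultimately have i: "block_start g w (Suc k) = 2 * (m - 1) + 2"
      by simp
    have "y (2 * (m - 1) + 1) = last (g (w k))"
      using is_image_last[OF img nonerasing, of k] i by simp
    moreover have "y (2 * (m - 1) + 2) = hd (g (w (Suc k)))"
      using is_imageD[OF img refl, of 0 "Suc k"] nonerasing i by (simp add: hd_conv_nth)
    ultimately show ?thesis
      using alt[of "m - 1"] by simp
  qed
  obtain k1 where "square_at w k1" "w k1 = True"
    using exists_square_of_letter[OF pfw] by blast
  then have "last (g True) \<noteq> hd (g True)"
    using junction[of k1] unfolding square_at_def by simp
  moreover obtain k2 where "w k2 = False" "w (Suc k2) = True"
    using exists_letter_then_complement[OF pfw, of False] by auto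
  then have "last (g False) \<noteq> hd (g True)"
    using junction[of k2] by simp
  ultimately show ?thesis
    by (cases a) auto
qed

lemma decimate_comp_mu_fixed_point:
  assumes img: "is_image g w w" and even: "\<And>x. even (length (g x))"
    and long: "\<And>x. 2 \<le> length (g x)" and mu_y: "is_image mu y w"
  defines "K \<equiv> morph_comp (decimate_morph g 0) mu"
  shows "fixed_point K y" and "K \<noteq> id_morph"
proof -
  have "y = (\<lambda>i. w (2 * i + 0))"
    using mu_y unfolding is_image_mu_iff by simp
  then have "is_image (decimate_morph g 0) w y"
    using is_image_decimate_morph[OF img even, of 0] by simp
  then have img_K: "is_image K y y"
    unfolding K_def by (rule is_image_comp[OF mu_y])
  have long_K: "2 \<le> length (K a)" for a
    using long[of a] long[of "\<not> a"] unfolding K_def morph_comp_def mu_def decimate_morph_def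
    by simp presburger
  have "K a \<noteq> []" for a
    using long_K[of a] by auto
  then show "fixed_point K y"
    by (rule is_image_fixed_point[OF img_K])
  show "K \<noteq> id_morph"
    using long_K by (auto simp: id_morph_def)
qed

lemma fixed_point_mu_preimage:
  assumes pf: "power_free (7/3) w" and fp: "fixed_point h w" and "h \<noteq> id_morph"
  obtains y K where "power_free (7/3) y" "K \<noteq> id_morph" "fixed_point K y" "is_image mu y w"
proof -
  define g where "g = morph_pow (morph_comp h h) 3"
  have img: "is_image g w w"
    unfolding g_def using is_image_pow[OF is_image_comp[OF fixed_point_is_image[OF fp]
        fixed_point_is_image[OF fp]]] .
  have long: "8 \<le> length (g x)" for x
    using length_morph_pow[of "morph_comp h h" 3 x] fixed_point_square_long[OF pf fp \<open>h \<noteq> id_morph\<close>]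
    unfolding g_def by simp
  have long5: "5 \<le> length (g x)" and long2: "2 \<le> length (g x)" and nonerasing: "g x \<noteq> []" for x
    using long[of x] by auto
  have even_length: "even (length (g x))" for x
    using even_image_length[OF pf block_start_parity_of_long_image[OF pf img nonerasing long5]] .
  have even: "even (block_start g w k)" for k
    using block_start_even[OF even_length] .
  obtain q where q: "q \<le> 1" and alt: "\<And>i. w (2 * i + q) \<noteq> w (2 * i + q + 1)"
    using image_alternates[OF pf pf img long2 even] by blast
  have "q = 0"
  proof (rule ccontr)
    assume "q \<noteq> 0"
    then have "q = 1"
      using q by simp
    then have "w (2 * i + 1) \<noteq> w (2 * i + 2)" for i
      using alt[of i] by (simp add: numeral_2_eq_2)
    then show False
      using no_image_with_common_last_letter[OF pf pf img nonerasing]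
        odd_alternation_common_last_letter[OF pf img nonerasing even] by blast
  qed
  define y where "y = (\<lambda>i. w (2 * i))"
  have "power_free (7/3) y"
    using power_free_decimation[OF pf alt] \<open>q = 0\<close> unfolding y_def by simp
  moreover have mu_y: "is_image mu y w"
    unfolding is_image_mu_iff y_def using alt \<open>q = 0\<close> by simp
  ultimately show ?thesis
    using that decimate_comp_mu_fixed_point[OF img even_length long2 mu_y] by blast
qed

section \<open>The Thue--Morse word\<close>

lemma nth_prefix: "prefix xs ys \<Longrightarrow> i < length xs \<Longrightarrow> ys ! i = xs ! i"
  by (auto elim!: prefixE simp: nth_append)

lemma length_mu_iter: "length ((morph_apply mu ^^ n) [a]) = 2 ^ n"
  by (induction n) simp_all

lemma prefix_mu_iter: "n \<le> m \<Longrightarrow> prefix ((morph_apply mu ^^ n) [a]) ((morph_apply mu ^^ m) [a])"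
proof (induction m rule: dec_induct)
  case (step m)
  have "prefix ((morph_apply mu ^^ m) [a]) ((morph_apply mu ^^ Suc m) [a])"
  proof (induction m)
    case 0
    then show ?case
      by (simp add: mu_def)
  next
    case (Suc m)
    then show ?case
      using prefix_morph_apply by fastforce
  qed
  with step.IH show ?case
    by (rule prefix_order.trans)
qed simp

lemma thue_morse_nth:
  assumes "i < 2 ^ n"
  shows "thue_morse a i = (morph_apply mu ^^ n) [a] ! i"
proof -
  have "i < 2 ^ Suc i"
    using less_exp[of i] by (simp del: less_exp)
  show ?thesis
    unfolding thue_morse_def
  proof (cases "n \<le> Suc i")
    case True
    then show "(morph_apply mu ^^ Suc i) [a] ! i = (morph_apply mu ^^ n) [a] ! i"
      by (rule nth_prefix[OF prefix_mu_iter]) (simp add: length_mu_iter assms)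
  next
    case False
    then show "(morph_apply mu ^^ Suc i) [a] ! i = (morph_apply mu ^^ n) [a] ! i"
      using nth_prefix[OF prefix_mu_iter[of "Suc i" n a]] \<open>i < 2 ^ Suc i\<close>
      by (simp add: length_mu_iter)
  qed
qed

lemma thue_morse_0: "thue_morse a 0 = a"
  by (simp add: thue_morse_def mu_def)

lemma thue_morse_is_image: "is_image mu (thue_morse a) (thue_morse a)"
  unfolding is_image_mu_iff
proof
  fix i
  define t where "t = (morph_apply mu ^^ Suc i) [a]"
  have i: "i < length t"
    using less_exp[of i] unfolding t_def length_mu_iter by (simp del: less_exp)
  have "thue_morse a (2 * i) = morph_apply mu t ! (2 * i)"
    "thue_morse a (2 * i + 1) = morph_apply mu t ! (2 * i + 1)"
    using i thue_morse_nth[of _ "Suc (Suc i)" a] unfolding t_def length_mu_iter by simp_all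
  moreover have "thue_morse a i = t ! i"
    using i thue_morse_nth[of i "Suc i" a] unfolding t_def length_mu_iter by simp
  ultimately show "thue_morse a (2 * i) = thue_morse a i \<and>
      thue_morse a (2 * i + 1) = (\<not> thue_morse a i)"
    using nth_morph_apply_mu[OF i] by simp
qed

lemma thue_morse_fixed_point: "fixed_point mu (thue_morse a)"
  using is_image_fixed_point[OF thue_morse_is_image] by (simp add: mu_def)

lemma mu_neq_id_morph: "mu \<noteq> id_morph"
  by (metis id_morph_def list.inject mu_def not_Cons_self2)

lemma eq_thue_morse_if_mu_preimages:
  assumes step: "\<And>v. P v \<Longrightarrow> \<exists>y. P y \<and> is_image mu y v" and "P w"
  shows "w = thue_morse (w 0)"
proof
  fix i
  show "w i = thue_morse (w 0) i"
    using \<open>P w\<close>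
  proof (induction i arbitrary: w rule: less_induct)
    case (less i)
    obtain y where "P y" and y: "is_image mu y w"
      using step[OF less.prems] by blast
    have w: "w (2 * j) = y j" "w (2 * j + 1) = (\<not> y j)" for j
      using y unfolding is_image_mu_iff by simp_all
    have t: "thue_morse (w 0) (2 * j) = thue_morse (w 0) j"
      "thue_morse (w 0) (2 * j + 1) = (\<not> thue_morse (w 0) j)" for j
      using thue_morse_is_image unfolding is_image_mu_iff by simp_all
    show ?case
    proof (cases "i = 0")
      case True
      then show ?thesis
        by (simp add: thue_morse_0)
    next
      case False
      define m where "m = i div 2"
      have "y m = thue_morse (y 0) m"
        using less.IH[of m y] \<open>P y\<close> False unfolding m_def by simp
      moreover have "y 0 = w 0"
        using w(1)[of 0] by simp
      moreover have "i = 2 * m \<or> i = 2 * m + 1"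
        unfolding m_def by arith
      ultimately show ?thesis
        using w t by auto
    qed
  qed
qed

theorem corollary11:
  fixes w :: "nat \<Rightarrow> bool"
  assumes "power_free (7/3) w"
  shows "(\<exists>h. h \<noteq> id_morph \<and> fixed_point h w) \<longleftrightarrow> (w = thue_morse False \<or> w = thue_morse True)"
proof
  assume "\<exists>h. h \<noteq> id_morph \<and> fixed_point h w"
  moreover have "\<exists>y. (power_free (7/3) y \<and> (\<exists>K. K \<noteq> id_morph \<and> fixed_point K y)) \<and> is_image mu y v"
    if "power_free (7/3) v \<and> (\<exists>h. h \<noteq> id_morph \<and> fixed_point h v)" for v
    using that fixed_point_mu_preimage by metis
  ultimately have "w = thue_morse (w 0)"
    using eq_thue_morse_if_mu_preimages[where P = "\<lambda>v. power_free (7/3) v \<and>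
        (\<exists>h. h \<noteq> id_morph \<and> fixed_point h v)"] assms by blast
  then show "w = thue_morse False \<or> w = thue_morse True"
    by (cases "w 0") auto
next
  assume "w = thue_morse False \<or> w = thue_morse True"
  then show "\<exists>h. h \<noteq> id_morph \<and> fixed_point h w"
    using thue_morse_fixed_point mu_neq_id_morph by blast
qed

end
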